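(* Let $G$ be a finite abelian group and let $M$ be a finite inverse $\hat G$-linear monoid of dimension $n$. Then there exists an injective monoid homomorphism $\phi_M:M\to\mathrm{End}_{\hat G}(M)\cong I_n(\hat G)$ such that $\phi_M(x^* )=\phi_M(x)^*$ and $\phi_M(gx)=g\phi_M(x)$ for all $x\in M$ and $g\in G$.
   Context: $\hat G=G\sqcup\{0\}$ with $0$ absorbing. $\mathrm{Vect}_{\hat G}$: objects are finite pointed sets with an action of $\hat G$ ($0v=0$, $g0=0$) such that $G$ acts freely on nonzero elements; morphisms $f$ satisfy $f(0)=0$, $f(gv)=gf(v)$, $f(v_1)=f(v_2)\neq0\Rightarrow Gv_1=Gv_2$. A $\hat G$-linear monoid is a finite monoid $M$ with absorbing element $0_M$ containing $G$ as a subgroup of units commuting with all of $M$, with $G$ acting freely by translation on $M\setminus\{0_M\}$; thus $M$ is an object of $\mathrm{Vect}_{\hat G}$, its dimension is the number of $G$-orbits in $M\setminus\{0_M\}$, and $\mathrm{End}_{\hat G}(M)$ is its endomorphism monoid in $\mathrm{Vect}_{\hat G}$, with $g\phi$ denoting the composite of $\phi$ with scalar multiplication by $g$. $I_n(\hat G)$ is the monoid of $n\times n$ matrices with entries in $\hat G$ having at most one nonzero entry in each row and column, under matrix multiplication; it is an inverse monoid and isomorphic to $\mathrm{End}_{\hat G}(\hat G^{\oplus n})$. A monoid is inverse if each $x$ has a unique $x^*$ with $xx^*x=x$ and $x^*xx^*=x^*$ (its $*$-inverse). *)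

theory Defs
  imports "HOL-Algebra.Group"
begin

definition hatG_linear_monoid :: "'m monoid \<Rightarrow> 'm set \<Rightarrow> 'm \<Rightarrow> bool" where
  "hatG_linear_monoid M G z \<longleftrightarrow>
     monoid M \<and> finite (carrier M) \<and>
     z \<in> carrier M \<and> (\<forall>x\<in>carrier M. z \<otimes>\<^bsub>M\<^esub> x = z \<and> x \<otimes>\<^bsub>M\<^esub> z = z) \<and>
     subgroup G (units_of M) \<and>
     (\<forall>g\<in>G. \<forall>h\<in>G. g \<otimes>\<^bsub>M\<^esub> h = h \<otimes>\<^bsub>M\<^esub> g) \<and>
     (\<forall>g\<in>G. \<forall>x\<in>carrier M. g \<otimes>\<^bsub>M\<^esub> x = x \<otimes>\<^bsub>M\<^esub> g) \<and>
     (\<forall>g\<in>G. \<forall>x\<in>carrier M - {z}. g \<otimes>\<^bsub>M\<^esub> x = x \<longrightarrow> g = \<one>\<^bsub>M\<^esub>)"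

definition inverse_monoid :: "('a, 'b) monoid_scheme \<Rightarrow> bool" where
  "inverse_monoid M \<longleftrightarrow> monoid M \<and>
     (\<forall>x\<in>carrier M. \<exists>!y. y \<in> carrier M \<and>
        x \<otimes>\<^bsub>M\<^esub> y \<otimes>\<^bsub>M\<^esub> x = x \<and> y \<otimes>\<^bsub>M\<^esub> x \<otimes>\<^bsub>M\<^esub> y = y)"

definition star :: "('a, 'b) monoid_scheme \<Rightarrow> 'a \<Rightarrow> 'a" where
  "star M x = (THE y. y \<in> carrier M \<and>
        x \<otimes>\<^bsub>M\<^esub> y \<otimes>\<^bsub>M\<^esub> x = x \<and> y \<otimes>\<^bsub>M\<^esub> x \<otimes>\<^bsub>M\<^esub> y = y)"

text \<open>Morphisms M \<rightarrow> M in Vect_{hat G} (functions on carrier M, extensional).\<close>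
definition End_set :: "'m monoid \<Rightarrow> 'm set \<Rightarrow> 'm \<Rightarrow> ('m \<Rightarrow> 'm) set" where
  "End_set M G z = {f. f \<in> extensional (carrier M) \<and> f \<in> carrier M \<rightarrow> carrier M \<and>
      f z = z \<and>
      (\<forall>g\<in>G. \<forall>v\<in>carrier M. f (g \<otimes>\<^bsub>M\<^esub> v) = g \<otimes>\<^bsub>M\<^esub> f v) \<and>
      (\<forall>v1\<in>carrier M. \<forall>v2\<in>carrier M. f v1 = f v2 \<and> f v1 \<noteq> z \<longrightarrow>
          (\<exists>g\<in>G. v1 = g \<otimes>\<^bsub>M\<^esub> v2))}"

definition End_mon :: "'m monoid \<Rightarrow> 'm set \<Rightarrow> 'm \<Rightarrow> ('m \<Rightarrow> 'm) monoid" where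
  "End_mon M G z = \<lparr> carrier = End_set M G z,
                     mult = (\<lambda>f h. compose (carrier M) f h),
                     one = (\<lambda>v\<in>carrier M. v) \<rparr>"

definition scal_End :: "'m monoid \<Rightarrow> 'm \<Rightarrow> ('m \<Rightarrow> 'm) \<Rightarrow> ('m \<Rightarrow> 'm)" where
  "scal_End M g f = (\<lambda>v\<in>carrier M. g \<otimes>\<^bsub>M\<^esub> f v)"

end

theory Submission
  imports Defs
begin

text \<open>The embedding is the Wagner--Preston representation of M on itself: x acts on v by left
  multiplication when v lies in the right ideal x* x M and sends v to the zero otherwise.
  It is multiplicative because the idempotents of an inverse monoid commute, it is injective
  because the image of x takes the value x at x* x, and each image is G-linear because G is central.
  Idempotent endomorphisms are partial identities (this is where freeness of the G-action
  enters), so they commute as well; hence *-inverses in End are unique and the image of x*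
  is forced to be the *-inverse of the image of x.\<close>

text \<open>If y and y' are both inverses of x, commuting the idempotents x y, x y' and then
  y x, y' x gives y' = y' x y = y.\<close>
lemma (in monoid) star_eq_if_idempotents_commute:
  assumes idempotents_commute: "\<And>e f. \<lbrakk>e \<in> carrier G; f \<in> carrier G; e \<otimes> e = e; f \<otimes> f = f\<rbrakk>
      \<Longrightarrow> e \<otimes> f = f \<otimes> e"
    and x: "x \<in> carrier G" and y: "y \<in> carrier G"
    and xyx: "x \<otimes> y \<otimes> x = x" and yxy: "y \<otimes> x \<otimes> y = y"
  shows "star G x = y"
  unfolding star_def
proof (rule the_equality)
  fix y' assume "y' \<in> carrier G \<and> x \<otimes> y' \<otimes> x = x \<and> y' \<otimes> x \<otimes> y' = y'"
  then have y': "y' \<in> carrier G" and xy'x: "x \<otimes> y' \<otimes> x = x" and y'xy': "y' \<otimes> x \<otimes> y' = y'"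
    by auto
  have idem: "a \<otimes> b \<otimes> a = a \<Longrightarrow> a \<in> carrier G \<Longrightarrow> b \<in> carrier G \<Longrightarrow> (a \<otimes> b) \<otimes> (a \<otimes> b) = a \<otimes> b"
    for a b by (simp add: m_assoc[symmetric])
  have "y' = y' \<otimes> (x \<otimes> y \<otimes> x) \<otimes> y'" using y'xy' xyx y' x by simp
  also have "\<dots> = y' \<otimes> (x \<otimes> y) \<otimes> (x \<otimes> y')" using x y y' by (simp add: m_assoc)
  also have "\<dots> = y' \<otimes> (x \<otimes> y') \<otimes> (x \<otimes> y)"
    using idempotents_commute[OF _ _ idem[OF xyx x y] idem[OF xy'x x y']] x y y' by (simp add: m_assoc)
  also have "\<dots> = y' \<otimes> x \<otimes> y" using y'xy' x y y' by (simp add: m_assoc[symmetric])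
  finally have "y' = y' \<otimes> x \<otimes> y" .
  also have "\<dots> = y' \<otimes> x \<otimes> (y \<otimes> x \<otimes> y)" using yxy by simp
  also have "\<dots> = (y' \<otimes> x) \<otimes> (y \<otimes> x) \<otimes> y" using x y y' by (simp add: m_assoc)
  also have "\<dots> = (y \<otimes> x) \<otimes> (y' \<otimes> x) \<otimes> y"
    using idempotents_commute[OF _ _ idem[OF y'xy' y' x] idem[OF yxy y x]] x y y' by simp
  also have "\<dots> = y \<otimes> (x \<otimes> y' \<otimes> x) \<otimes> y" using x y y' by (simp add: m_assoc)
  also have "\<dots> = y" using xy'x yxy by simp
  finally show "y' = y" .
qed (use assms in auto)

locale inv_monoid = monoid M for M (structure) +
  assumes inverse: "inverse_monoid M"
begin

abbreviation inv_star :: "'a \<Rightarrow> 'a"  (\<open>_\<^sup>\<star>\<close> [1000] 1000)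
  where "x\<^sup>\<star> \<equiv> star M x"

lemma star_is_inverse:
  assumes "x \<in> carrier M"
  shows "x\<^sup>\<star> \<in> carrier M \<and> x \<otimes> x\<^sup>\<star> \<otimes> x = x \<and> x\<^sup>\<star> \<otimes> x \<otimes> x\<^sup>\<star> = x\<^sup>\<star>"
  unfolding star_def
  by (rule theI') (use inverse assms in \<open>auto simp: inverse_monoid_def\<close>)

lemma star_closed [intro, simp]: "x \<in> carrier M \<Longrightarrow> x\<^sup>\<star> \<in> carrier M"
  and mult_star_mult [simp]: "x \<in> carrier M \<Longrightarrow> x \<otimes> x\<^sup>\<star> \<otimes> x = x"
  and star_mult_star [simp]: "x \<in> carrier M \<Longrightarrow> x\<^sup>\<star> \<otimes> x \<otimes> x\<^sup>\<star> = x\<^sup>\<star>"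
  using star_is_inverse by blast+

lemma star_eqI:
  assumes "x \<in> carrier M" "y \<in> carrier M" "x \<otimes> y \<otimes> x = x" "y \<otimes> x \<otimes> y = y"
  shows "x\<^sup>\<star> = y"
  unfolding star_def
  by (rule the1_equality) (use inverse assms in \<open>auto simp: inverse_monoid_def\<close>)

lemma star_idempotent: "e \<in> carrier M \<Longrightarrow> e \<otimes> e = e \<Longrightarrow> e\<^sup>\<star> = e"
  by (rule star_eqI) auto

lemma star_mult_idempotent: "x \<in> carrier M \<Longrightarrow> x\<^sup>\<star> \<otimes> x \<otimes> (x\<^sup>\<star> \<otimes> x) = x\<^sup>\<star> \<otimes> x"
  by (simp add: m_assoc[symmetric])

lemma mult_star_idempotent: "x \<in> carrier M \<Longrightarrow> x \<otimes> x\<^sup>\<star> \<otimes> (x \<otimes> x\<^sup>\<star>) = x \<otimes> x\<^sup>\<star>"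
  by (simp add: m_assoc[symmetric])

text \<open>With a = (ef)*, the element fae is also an inverse of ef, so a = fae, which makes a
  idempotent and hence equal to its own inverse ef.\<close>
lemma idempotent_mult:
  assumes e: "e \<in> carrier M" "e \<otimes> e = e" and f: "f \<in> carrier M" "f \<otimes> f = f"
  shows "(e \<otimes> f) \<otimes> (e \<otimes> f) = e \<otimes> f"
proof -
  define a where "a = (e \<otimes> f)\<^sup>\<star>"
  have ef: "e \<otimes> f \<in> carrier M" and a: "a \<in> carrier M" using e f by (auto simp: a_def)
  have ee: "e \<otimes> (e \<otimes> w) = e \<otimes> w" and ff: "f \<otimes> (f \<otimes> w) = f \<otimes> w" if "w \<in> carrier M" for w
    using e f that by (simp_all add: m_assoc[symmetric])
  have "e \<otimes> f \<otimes> (f \<otimes> a \<otimes> e) \<otimes> (e \<otimes> f) = e \<otimes> f \<otimes> a \<otimes> (e \<otimes> f)"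
    using e f a by (simp add: m_assoc ee ff)
  then have 1: "e \<otimes> f \<otimes> (f \<otimes> a \<otimes> e) \<otimes> (e \<otimes> f) = e \<otimes> f"
    using ef by (simp add: a_def)
  have "f \<otimes> a \<otimes> e \<otimes> (e \<otimes> f) \<otimes> (f \<otimes> a \<otimes> e) = f \<otimes> (a \<otimes> (e \<otimes> f) \<otimes> a) \<otimes> e"
    using e f a by (simp add: m_assoc ee ff)
  then have 2: "f \<otimes> a \<otimes> e \<otimes> (e \<otimes> f) \<otimes> (f \<otimes> a \<otimes> e) = f \<otimes> a \<otimes> e"
    using ef by (simp add: a_def)
  have a_eq: "a = f \<otimes> a \<otimes> e"
    using star_eqI[OF ef _ 1 2] e f a unfolding a_def[symmetric] by simp
  have "a \<otimes> a = f \<otimes> (a \<otimes> (e \<otimes> f) \<otimes> a) \<otimes> e"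
    using e f a by (subst (1 2) a_eq) (simp add: m_assoc)
  also have "\<dots> = a" using ef a_eq by (simp add: a_def)
  finally have aa: "a \<otimes> a = a" .
  then have "a\<^sup>\<star> = a" by (rule star_idempotent[OF a])
  moreover have "a\<^sup>\<star> = e \<otimes> f" using ef unfolding a_def by (intro star_eqI) auto
  ultimately show ?thesis using aa by simp
qed

lemma idempotents_commute:
  assumes e: "e \<in> carrier M" "e \<otimes> e = e" and f: "f \<in> carrier M" "f \<otimes> f = f"
  shows "e \<otimes> f = f \<otimes> e"
proof -
  have ef: "(e \<otimes> f) \<otimes> (e \<otimes> f) = e \<otimes> f" and fe: "(f \<otimes> e) \<otimes> (f \<otimes> e) = f \<otimes> e"
    using idempotent_mult e f by blast+
  have ee: "e \<otimes> (e \<otimes> w) = e \<otimes> w" and ff: "f \<otimes> (f \<otimes> w) = f \<otimes> w" if "w \<in> carrier M" for w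
    using e f that by (simp_all add: m_assoc[symmetric])
  have "(e \<otimes> f)\<^sup>\<star> = f \<otimes> e"
  proof (rule star_eqI)
    show "e \<otimes> f \<otimes> (f \<otimes> e) \<otimes> (e \<otimes> f) = e \<otimes> f"
      using e f ef by (simp add: m_assoc ee ff)
    show "f \<otimes> e \<otimes> (e \<otimes> f) \<otimes> (f \<otimes> e) = f \<otimes> e"
      using e f fe by (simp add: m_assoc ee ff)
  qed (use e f in auto)
  moreover have "(e \<otimes> f)\<^sup>\<star> = e \<otimes> f" using star_idempotent e f ef by blast
  ultimately show ?thesis by simp
qed

lemma star_mult:
  assumes x: "x \<in> carrier M" and y: "y \<in> carrier M"
  shows "(x \<otimes> y)\<^sup>\<star> = y\<^sup>\<star> \<otimes> x\<^sup>\<star>"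
proof (rule star_eqI)
  have comm: "x\<^sup>\<star> \<otimes> x \<otimes> (y \<otimes> y\<^sup>\<star>) = y \<otimes> y\<^sup>\<star> \<otimes> (x\<^sup>\<star> \<otimes> x)"
    using x y by (intro idempotents_commute star_mult_idempotent mult_star_idempotent) auto
  have "x \<otimes> y \<otimes> (y\<^sup>\<star> \<otimes> x\<^sup>\<star>) \<otimes> (x \<otimes> y) = x \<otimes> (y \<otimes> y\<^sup>\<star> \<otimes> (x\<^sup>\<star> \<otimes> x)) \<otimes> y"
    using x y by (simp add: m_assoc)
  also have "\<dots> = x \<otimes> (x\<^sup>\<star> \<otimes> x \<otimes> (y \<otimes> y\<^sup>\<star>)) \<otimes> y" by (simp only: comm)
  also have "\<dots> = (x \<otimes> x\<^sup>\<star> \<otimes> x) \<otimes> (y \<otimes> y\<^sup>\<star> \<otimes> y)" using x y by (simp add: m_assoc)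
  finally show "x \<otimes> y \<otimes> (y\<^sup>\<star> \<otimes> x\<^sup>\<star>) \<otimes> (x \<otimes> y) = x \<otimes> y" using x y by simp
  have "y\<^sup>\<star> \<otimes> x\<^sup>\<star> \<otimes> (x \<otimes> y) \<otimes> (y\<^sup>\<star> \<otimes> x\<^sup>\<star>) = y\<^sup>\<star> \<otimes> (x\<^sup>\<star> \<otimes> x \<otimes> (y \<otimes> y\<^sup>\<star>)) \<otimes> x\<^sup>\<star>"
    using x y by (simp add: m_assoc)
  also have "\<dots> = y\<^sup>\<star> \<otimes> (y \<otimes> y\<^sup>\<star> \<otimes> (x\<^sup>\<star> \<otimes> x)) \<otimes> x\<^sup>\<star>" by (simp only: comm)
  also have "\<dots> = (y\<^sup>\<star> \<otimes> y \<otimes> y\<^sup>\<star>) \<otimes> (x\<^sup>\<star> \<otimes> x \<otimes> x\<^sup>\<star>)" using x y by (simp add: m_assoc)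
  finally show "y\<^sup>\<star> \<otimes> x\<^sup>\<star> \<otimes> (x \<otimes> y) \<otimes> (y\<^sup>\<star> \<otimes> x\<^sup>\<star>) = y\<^sup>\<star> \<otimes> x\<^sup>\<star>" using x y by simp
qed (use x y in auto)

lemma star_one: "\<one>\<^sup>\<star> = \<one>"
  by (simp add: star_idempotent)

lemma star_Units: "u \<in> Units M \<Longrightarrow> u\<^sup>\<star> = inv u"
  by (rule star_eqI) (auto simp: m_assoc)

lemma star_Units_mult_self:
  assumes u: "u \<in> Units M" and x: "x \<in> carrier M"
  shows "(u \<otimes> x)\<^sup>\<star> \<otimes> (u \<otimes> x) = x\<^sup>\<star> \<otimes> x"
proof -
  have "(u \<otimes> x)\<^sup>\<star> \<otimes> (u \<otimes> x) = x\<^sup>\<star> \<otimes> inv u \<otimes> (u \<otimes> x)"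
    using u x by (simp add: star_mult star_Units Units_closed)
  also have "\<dots> = x\<^sup>\<star> \<otimes> (inv u \<otimes> u) \<otimes> x"
    using u x by (simp add: m_assoc Units_closed del: Units_l_inv)
  finally show ?thesis using u x by simp
qed

end

locale hatG_linear = monoid M for M :: "'m monoid" (structure) +
  fixes G :: "'m set" and z :: 'm
  assumes hatG_linear: "hatG_linear_monoid M G z"
begin

lemma zero_closed [simp]: "z \<in> carrier M"
  and zero_mult [simp]: "x \<in> carrier M \<Longrightarrow> z \<otimes> x = z"
  and mult_zero [simp]: "x \<in> carrier M \<Longrightarrow> x \<otimes> z = z"
  and G_central: "g \<in> G \<Longrightarrow> x \<in> carrier M \<Longrightarrow> g \<otimes> x = x \<otimes> g"
  and G_free: "g \<in> G \<Longrightarrow> x \<in> carrier M \<Longrightarrow> x \<noteq> z \<Longrightarrow> g \<otimes> x = x \<Longrightarrow> g = \<one>"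
  using hatG_linear unfolding hatG_linear_monoid_def by auto

lemma subgroup_G: "subgroup G (units_of M)"
  using hatG_linear unfolding hatG_linear_monoid_def by auto

lemma G_Units: "g \<in> G \<Longrightarrow> g \<in> Units M"
  using subgroup.subset[OF subgroup_G] by (auto simp: units_of_carrier)

lemma G_closed [simp]: "g \<in> G \<Longrightarrow> g \<in> carrier M"
  using G_Units by (auto simp: Units_def)

lemma one_in_G [simp]: "\<one> \<in> G"
  using subgroup.one_closed[OF subgroup_G] by (simp add: units_of_one)

lemma G_mult_closed: "g \<in> G \<Longrightarrow> h \<in> G \<Longrightarrow> g \<otimes> h \<in> G"
  using subgroup.m_closed[OF subgroup_G] by (simp add: units_of_mult)

lemma End_compose_closed:
  assumes f: "f \<in> End_set M G z" and h: "h \<in> End_set M G z"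
  shows "compose (carrier M) f h \<in> End_set M G z"
proof -
  have f_Pi: "f \<in> carrier M \<rightarrow> carrier M" and f_zero: "f z = z"
    and f_G: "\<And>g v. g \<in> G \<Longrightarrow> v \<in> carrier M \<Longrightarrow> f (g \<otimes> v) = g \<otimes> f v"
    and f_fibres: "\<And>u1 u2. \<lbrakk>u1 \<in> carrier M; u2 \<in> carrier M; f u1 = f u2; f u1 \<noteq> z\<rbrakk>
      \<Longrightarrow> \<exists>g\<in>G. u1 = g \<otimes> u2"
    and h_Pi: "h \<in> carrier M \<rightarrow> carrier M" and h_zero: "h z = z"
    and h_G: "\<And>g v. g \<in> G \<Longrightarrow> v \<in> carrier M \<Longrightarrow> h (g \<otimes> v) = g \<otimes> h v"
    and h_fibres: "\<And>u1 u2. \<lbrakk>u1 \<in> carrier M; u2 \<in> carrier M; h u1 = h u2; h u1 \<noteq> z\<rbrakk>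
      \<Longrightarrow> \<exists>g\<in>G. u1 = g \<otimes> u2"
    using f h unfolding End_set_def by auto
  show ?thesis
    unfolding End_set_def mem_Collect_eq
  proof (intro conjI ballI impI)
    show "compose (carrier M) f h \<in> extensional (carrier M)" by simp
    show "compose (carrier M) f h \<in> carrier M \<rightarrow> carrier M"
      using f_Pi h_Pi by (auto simp: compose_eq)
    show "compose (carrier M) f h z = z" using f_zero h_zero by (simp add: compose_eq)
    show "compose (carrier M) f h (g \<otimes> v) = g \<otimes> compose (carrier M) f h v"
      if "g \<in> G" "v \<in> carrier M" for g v
      using that f_G h_G h_Pi by (simp add: compose_eq Pi_iff)
  next
    fix v1 v2 assume v: "v1 \<in> carrier M" "v2 \<in> carrier M"
      and eq: "compose (carrier M) f h v1 = compose (carrier M) f h v2 \<and> compose (carrier M) f h v1 \<noteq> z"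
    then have fhv: "f (h v1) = f (h v2)" "f (h v1) \<noteq> z" by (auto simp: compose_eq)
    then obtain g1 where g1: "g1 \<in> G" "h v1 = g1 \<otimes> h v2"
      using f_fibres h_Pi v by blast
    have "h v1 \<noteq> z" using fhv f_zero by auto
    moreover have "h v1 = h (g1 \<otimes> v2)" using g1 h_G v by simp
    ultimately obtain g2 where g2: "g2 \<in> G" "v1 = g2 \<otimes> (g1 \<otimes> v2)"
      using h_fibres v g1 by (metis G_closed m_closed)
    show "\<exists>g\<in>G. v1 = g \<otimes> v2"
      using g1 g2 v by (intro bexI[of _ "g2 \<otimes> g1"]) (auto simp: m_assoc G_mult_closed)
  qed
qed

lemma End_id: "(\<lambda>v\<in>carrier M. v) \<in> End_set M G z"
  unfolding End_set_def by (auto intro!: bexI[of _ \<one>])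

lemma monoid_End_mon: "monoid (End_mon M G z)"
proof (rule monoidI)
  fix f h k assume "f \<in> carrier (End_mon M G z)" "h \<in> carrier (End_mon M G z)"
    "k \<in> carrier (End_mon M G z)"
  then show "f \<otimes>\<^bsub>End_mon M G z\<^esub> h \<otimes>\<^bsub>End_mon M G z\<^esub> k =
      f \<otimes>\<^bsub>End_mon M G z\<^esub> (h \<otimes>\<^bsub>End_mon M G z\<^esub> k)"
    by (simp add: End_mon_def End_set_def compose_assoc[symmetric])
next
  fix f assume "f \<in> carrier (End_mon M G z)"
  then show "\<one>\<^bsub>End_mon M G z\<^esub> \<otimes>\<^bsub>End_mon M G z\<^esub> f = f"
    and "f \<otimes>\<^bsub>End_mon M G z\<^esub> \<one>\<^bsub>End_mon M G z\<^esub> = f"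
    by (auto simp: End_mon_def End_set_def Id_compose compose_Id)
qed (simp_all add: End_mon_def End_compose_closed End_id)

text \<open>This is where freeness of the action of G is used.\<close>
lemma End_idempotent_cases:
  assumes e: "e \<in> End_set M G z" and ee: "compose (carrier M) e e = e" and v: "v \<in> carrier M"
  shows "e v = v \<or> e v = z"
proof (rule disjCI)
  assume nz: "e v \<noteq> z"
  have ev: "e v \<in> carrier M" using e v by (auto simp: End_set_def)
  have "e (e v) = e v" using ee v by (metis compose_eq)
  then obtain g where g: "g \<in> G" "e v = g \<otimes> v"
    using e ev v nz unfolding End_set_def mem_Collect_eq by metis
  have "e v = e (g \<otimes> v)" using \<open>e (e v) = e v\<close> g by simp
  also have "\<dots> = g \<otimes> e v" using e g v by (simp add: End_set_def)
  finally have "g = \<one>" using G_free[OF g(1) ev nz] by simp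
  then show "e v = v" using g v by simp
qed

lemma End_idempotents_commute:
  assumes "e \<in> carrier (End_mon M G z)" "e \<otimes>\<^bsub>End_mon M G z\<^esub> e = e"
    and "f \<in> carrier (End_mon M G z)" "f \<otimes>\<^bsub>End_mon M G z\<^esub> f = f"
  shows "e \<otimes>\<^bsub>End_mon M G z\<^esub> f = f \<otimes>\<^bsub>End_mon M G z\<^esub> e"
proof -
  have e: "e \<in> End_set M G z" "compose (carrier M) e e = e"
    and f: "f \<in> End_set M G z" "compose (carrier M) f f = f"
    using assms by (auto simp: End_mon_def)
  have zero_fixed: "e z = z" "f z = z" using e f by (simp_all add: End_set_def)
  have "compose (carrier M) e f = compose (carrier M) f e"
  proof (rule extensionalityI[OF compose_extensional compose_extensional])
    fix v assume v: "v \<in> carrier M"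
    show "compose (carrier M) e f v = compose (carrier M) f e v"
      using End_idempotent_cases[OF e v] End_idempotent_cases[OF f v] zero_fixed v
      by (auto simp: compose_eq)
  qed
  then show ?thesis by (simp add: End_mon_def)
qed

lemma star_End_mon_eqI:
  assumes "f \<in> carrier (End_mon M G z)" "h \<in> carrier (End_mon M G z)"
    and "f \<otimes>\<^bsub>End_mon M G z\<^esub> h \<otimes>\<^bsub>End_mon M G z\<^esub> f = f"
    and "h \<otimes>\<^bsub>End_mon M G z\<^esub> f \<otimes>\<^bsub>End_mon M G z\<^esub> h = h"
  shows "star (End_mon M G z) f = h"
  using monoid.star_eq_if_idempotents_commute[OF monoid_End_mon End_idempotents_commute] assms
  by blast

end

locale hatG_linear_inverse = hatG_linear M G z + inv_monoid M
  for M :: "'m monoid" (structure) and G z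
begin

text \<open>Since x* x is idempotent, the condition x* x v = v says that v lies in the right
  ideal x* x M.\<close>
definition partial_transl :: "'m \<Rightarrow> 'm \<Rightarrow> 'm" where
  "partial_transl x = (\<lambda>v\<in>carrier M. if x\<^sup>\<star> \<otimes> x \<otimes> v = v then x \<otimes> v else z)"

lemma partial_transl_End:
  assumes x: "x \<in> carrier M"
  shows "partial_transl x \<in> End_set M G z"
  unfolding End_set_def mem_Collect_eq
proof (intro conjI ballI impI)
  show "partial_transl x \<in> extensional (carrier M)" "partial_transl x \<in> carrier M \<rightarrow> carrier M"
    "partial_transl x z = z"
    using x by (auto simp: partial_transl_def)
next
  fix g v assume g: "g \<in> G" and v: "v \<in> carrier M"
  have "x\<^sup>\<star> \<otimes> x \<otimes> (g \<otimes> v) = g \<otimes> (x\<^sup>\<star> \<otimes> x \<otimes> v)" and "x \<otimes> (g \<otimes> v) = g \<otimes> (x \<otimes> v)"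
    using G_central[OF g] x v g by (metis m_assoc m_closed G_closed star_closed)+
  moreover have "g \<otimes> (x\<^sup>\<star> \<otimes> x \<otimes> v) = g \<otimes> v \<longleftrightarrow> x\<^sup>\<star> \<otimes> x \<otimes> v = v"
    using Units_l_cancel[OF G_Units[OF g]] x v by auto
  ultimately show "partial_transl x (g \<otimes> v) = g \<otimes> partial_transl x v"
    using g v by (simp add: partial_transl_def)
next
  fix v1 v2 assume v: "v1 \<in> carrier M" "v2 \<in> carrier M"
    and eq: "partial_transl x v1 = partial_transl x v2 \<and> partial_transl x v1 \<noteq> z"
  then have "x\<^sup>\<star> \<otimes> x \<otimes> v1 = v1" "x\<^sup>\<star> \<otimes> x \<otimes> v2 = v2" "x \<otimes> v1 = x \<otimes> v2"
    by (auto simp: partial_transl_def split: if_splits)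
  then have "v1 = v2" using x v by (metis m_assoc star_closed)
  then show "\<exists>g\<in>G. v1 = g \<otimes> v2" using v by (intro bexI[of _ \<one>]) auto
qed

lemma partial_transl_dom_mult:
  assumes x: "x \<in> carrier M" and y: "y \<in> carrier M" and v: "v \<in> carrier M"
  shows "(x \<otimes> y)\<^sup>\<star> \<otimes> (x \<otimes> y) \<otimes> v = v \<longleftrightarrow> y\<^sup>\<star> \<otimes> y \<otimes> v = v \<and> x\<^sup>\<star> \<otimes> x \<otimes> (y \<otimes> v) = y \<otimes> v"
proof -
  define e where "e = x\<^sup>\<star> \<otimes> x"
  define f where "f = y \<otimes> y\<^sup>\<star>"
  have e: "e \<in> carrier M" "e \<otimes> e = e" and f: "f \<in> carrier M" "f \<otimes> f = f"
    using x y star_mult_idempotent mult_star_idempotent by (auto simp: e_def f_def)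
  have lhs: "(x \<otimes> y)\<^sup>\<star> \<otimes> (x \<otimes> y) \<otimes> v = y\<^sup>\<star> \<otimes> (e \<otimes> (y \<otimes> v))"
    using x y v by (simp add: star_mult m_assoc e_def)
  show ?thesis unfolding lhs e_def[symmetric]
  proof
    assume w: "y\<^sup>\<star> \<otimes> (e \<otimes> (y \<otimes> v)) = v"
    have "y\<^sup>\<star> \<otimes> y \<otimes> v = (y\<^sup>\<star> \<otimes> y \<otimes> y\<^sup>\<star>) \<otimes> (e \<otimes> (y \<otimes> v))"
      using y v e by (subst (1) w[symmetric]) (simp add: m_assoc)
    also have "\<dots> = v" using y w by simp
    finally have dom_y: "y\<^sup>\<star> \<otimes> y \<otimes> v = v" .
    have "e \<otimes> (y \<otimes> v) = (e \<otimes> f) \<otimes> (e \<otimes> (y \<otimes> v))"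
      using y v e by (subst (1) w[symmetric]) (simp add: m_assoc f_def)
    also have "\<dots> = f \<otimes> (e \<otimes> e) \<otimes> (y \<otimes> v)"
      using idempotents_commute[OF e f] y v e(1) f(1) by (simp add: m_assoc)
    also have "\<dots> = y \<otimes> v"
      using y v e by (subst (2) w[symmetric]) (simp add: m_assoc f_def)
    finally show "y\<^sup>\<star> \<otimes> y \<otimes> v = v \<and> e \<otimes> (y \<otimes> v) = y \<otimes> v" using dom_y by simp
  next
    assume "y\<^sup>\<star> \<otimes> y \<otimes> v = v \<and> e \<otimes> (y \<otimes> v) = y \<otimes> v"
    then show "y\<^sup>\<star> \<otimes> (e \<otimes> (y \<otimes> v)) = v" using y v by (simp add: m_assoc)
  qed
qed

lemma partial_transl_mult:
  assumes x: "x \<in> carrier M" and y: "y \<in> carrier M"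
  shows "partial_transl (x \<otimes> y) = compose (carrier M) (partial_transl x) (partial_transl y)"
proof (rule extensionalityI[OF _ compose_extensional])
  show "partial_transl (x \<otimes> y) \<in> extensional (carrier M)" by (simp add: partial_transl_def)
  fix v assume v: "v \<in> carrier M"
  show "partial_transl (x \<otimes> y) v = compose (carrier M) (partial_transl x) (partial_transl y) v"
    using partial_transl_dom_mult[OF x y v] x y v by (simp add: compose_eq partial_transl_def m_assoc)
qed

lemma partial_transl_one: "partial_transl \<one> = (\<lambda>v\<in>carrier M. v)"
  unfolding partial_transl_def by (rule restrict_ext) (simp add: star_one)

lemma partial_transl_Units_mult:
  assumes u: "u \<in> Units M" and x: "x \<in> carrier M"
  shows "partial_transl (u \<otimes> x) = scal_End M u (partial_transl x)"
  unfolding partial_transl_def scal_End_def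
  by (rule restrict_ext) (use star_Units_mult_self[OF u x] u x in \<open>simp add: m_assoc Units_closed\<close>)

lemma partial_transl_self: "x \<in> carrier M \<Longrightarrow> partial_transl x (x\<^sup>\<star> \<otimes> x) = x"
  by (simp add: partial_transl_def star_mult_idempotent m_assoc[symmetric])

lemma partial_transl_eqD:
  assumes x: "x \<in> carrier M" and y: "y \<in> carrier M" and eq: "partial_transl x = partial_transl y"
  shows "x = y \<otimes> (x\<^sup>\<star> \<otimes> x) \<or> x = z"
  using partial_transl_self[OF x] x y unfolding eq by (auto simp: partial_transl_def split: if_splits)

lemma inj_on_partial_transl: "inj_on partial_transl (carrier M)"
proof (rule inj_onI)
  fix x y assume x: "x \<in> carrier M" and y: "y \<in> carrier M" and eq: "partial_transl x = partial_transl y"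
  consider "x = z" | "y = z" | "x = y \<otimes> (x\<^sup>\<star> \<otimes> x)" "y = x \<otimes> (y\<^sup>\<star> \<otimes> y)"
    using partial_transl_eqD[OF x y eq] partial_transl_eqD[OF y x eq[symmetric]] by blast
  then show "x = y"
  proof cases
    case 1
    then show ?thesis using partial_transl_eqD[OF y x eq[symmetric]] y by auto
  next
    case 2
    then show ?thesis using partial_transl_eqD[OF x y eq] x by auto
  next
    case 3
    have "x = x \<otimes> (y\<^sup>\<star> \<otimes> y) \<otimes> (x\<^sup>\<star> \<otimes> x)" using 3 by simp
    also have "\<dots> = (x \<otimes> x\<^sup>\<star> \<otimes> x) \<otimes> (y\<^sup>\<star> \<otimes> y)"
      using idempotents_commute[OF _ star_mult_idempotent _ star_mult_idempotent, of x y] x y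
      by (simp add: m_assoc)
    also have "\<dots> = y" using 3 x by simp
    finally show ?thesis .
  qed
qed

lemma partial_transl_star:
  assumes x: "x \<in> carrier M"
  shows "partial_transl (x\<^sup>\<star>) = star (End_mon M G z) (partial_transl x)"
proof (rule sym, rule star_End_mon_eqI)
  have hom: "partial_transl a \<otimes>\<^bsub>End_mon M G z\<^esub> partial_transl b = partial_transl (a \<otimes> b)"
    if "a \<in> carrier M" "b \<in> carrier M" for a b
    using that by (simp add: End_mon_def partial_transl_mult)
  show "partial_transl x \<in> carrier (End_mon M G z)" "partial_transl (x\<^sup>\<star>) \<in> carrier (End_mon M G z)"
    using x by (simp_all add: End_mon_def partial_transl_End)
  show "partial_transl x \<otimes>\<^bsub>End_mon M G z\<^esub> partial_transl (x\<^sup>\<star>) \<otimes>\<^bsub>End_mon M G z\<^esub> partial_transl x =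
      partial_transl x"
    and "partial_transl (x\<^sup>\<star>) \<otimes>\<^bsub>End_mon M G z\<^esub> partial_transl x \<otimes>\<^bsub>End_mon M G z\<^esub>
      partial_transl (x\<^sup>\<star>) = partial_transl (x\<^sup>\<star>)"
    using x by (simp_all add: hom)
qed

end

theorem mainTheorem6:
  fixes M :: "'m monoid" and G :: "'m set" and z :: 'm
  assumes "hatG_linear_monoid M G z"
    and "inverse_monoid M"
  shows "\<exists>\<phi>. \<phi> \<in> hom M (End_mon M G z) \<and> \<phi> \<one>\<^bsub>M\<^esub> = \<one>\<^bsub>End_mon M G z\<^esub> \<and>
             inj_on \<phi> (carrier M) \<and>
             (\<forall>x\<in>carrier M. \<phi> (star M x) = star (End_mon M G z) (\<phi> x)) \<and>
             (\<forall>x\<in>carrier M. \<forall>g\<in>G. \<phi> (g \<otimes>\<^bsub>M\<^esub> x) = scal_End M g (\<phi> x))"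
proof -
  have "monoid M" using assms(1) by (simp add: hatG_linear_monoid_def)
  then interpret hatG_linear_inverse M G z
    using assms by (intro hatG_linear_inverse.intro hatG_linear.intro hatG_linear_axioms.intro
        inv_monoid.intro inv_monoid_axioms.intro)
  show ?thesis
  proof (intro exI conjI ballI)
    show "partial_transl \<in> hom M (End_mon M G z)"
      by (auto simp: hom_def End_mon_def partial_transl_End partial_transl_mult)
    show "partial_transl \<one>\<^bsub>M\<^esub> = \<one>\<^bsub>End_mon M G z\<^esub>"
      by (simp add: End_mon_def partial_transl_one)
    show "inj_on partial_transl (carrier M)" by (rule inj_on_partial_transl)
    show "partial_transl (star M x) = star (End_mon M G z) (partial_transl x)" if "x \<in> carrier M" for x
      using that by (rule partial_transl_star)
    show "partial_transl (g \<otimes>\<^bsub>M\<^esub> x) = scal_End M g (partial_transl x)" if "x \<in> carrier M" "g \<in> G" for x g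
      using that by (simp add: partial_transl_Units_mult G_Units)
  qed
qed

end
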